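(* Let $\mathcal{V}$ be a linear subspace of $\mathrm{A}_n(\mathbb{K})$. Let $C\subseteq\mathbb{K}^n$ be a linear hyperplane of $\mathbb{K}^n$ if $\#\mathbb{K}=2$, or a union $H_1\cup H_2$ of two linear hyperplanes of $\mathbb{K}^n$ otherwise. Assume that $E:=\{x\in\mathbb{K}^n:\dim\mathcal{V}x=n-1\}$ is included in $C$, where $\mathcal{V}x:=\{Mx\mid M\in\mathcal{V}\}$. Then $\dim\mathcal{V}\leq\binom{n-1}{2}$.
   Context: $\mathrm{A}_n(\mathbb{K})$ denotes the space of alternating $n\times n$ matrices over the field $\mathbb{K}$ (skew-symmetric with zero diagonal). *)

theory Defs
  imports "HOL-Analysis.Analysis"
begin

definition mat_scale :: "'a::field \<Rightarrow> 'a^'n^'m \<Rightarrow> 'a^'n^'m" where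
  "mat_scale c M = (\<chi> i j. c * M $ i $ j)"

interpretation matsp: vector_space "mat_scale :: 'a::field \<Rightarrow> 'a^'n^'m \<Rightarrow> 'a^'n^'m"
  by unfold_locales (auto simp: mat_scale_def vec_eq_iff algebra_simps)

definition alternating :: "'a::field^'n^'n \<Rightarrow> bool" where
  "alternating M \<longleftrightarrow> transpose M = - M \<and> (\<forall>i. M $ i $ i = 0)"

definition linear_hyperplane :: "('a::field^'n) set \<Rightarrow> bool" where
  "linear_hyperplane H \<longleftrightarrow>
     (\<exists>a::'a^'n. a \<noteq> 0 \<and> H = {x. (\<Sum>i\<in>UNIV. a $ i * x $ i) = 0})"

end

theory Submission
  imports Defs
begin

text \<open>
  Let \<open>V\<close> vanish on a set \<open>Z\<close> and let \<open>k\<close> be the dimension of the annihilator of \<open>Z\<close>.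
  For \<open>e \<notin> span Z\<close>, the matrices of \<open>V\<close> killing \<open>e\<close> vanish on \<open>insert e Z\<close>, whose
  annihilator is smaller, while \<open>V e\<close> lies in that annihilator because \<open>M e\<close> is orthogonal
  to \<open>e\<close> and to \<open>Z\<close>. Rank--nullity then gives \<open>dim V \<le> k choose 2\<close>.

  The same recursion produces vectors of high rank: if \<open>dim V > (k - 1) choose 2\<close> and
  \<open>H1, H2\<close> are hyperplanes with \<open>Z \<subseteq> H1\<close>, take \<open>e\<close> outside both. Either \<open>dim (V e) \<ge> k - 1\<close>,
  or the kernel at \<open>e\<close> is large enough to apply induction with the hyperplane
  \<open>(M1 e)\<^sup>\<bottom>\<close>; the resulting \<open>x\<close> is moved along \<open>e\<close> off \<open>H1 \<union> H2\<close> (a line meets a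
  hyperplane at most once, so this needs three scalars, or \<open>H1 = H2\<close> over \<open>GF(2)\<close>), and \<open>M1 x\<close>
  (not orthogonal to \<open>e\<close>) raises the rank by one. For \<open>Z = {}\<close> and \<open>k = n\<close> this gives
  \<open>x \<notin> C\<close> with \<open>dim (V x) \<ge> n - 1\<close>; as \<open>V x \<subseteq> x\<^sup>\<bottom>\<close>, in fact \<open>x \<in> E \<subseteq> C\<close>.
\<close>

context finite_dimensional_vector_space
begin

lemma dim_union_le_card:
  assumes "finite B"
  shows "dim (A \<union> B) \<le> dim A + card B"
  using assms
proof (induction B rule: finite_induct)
  case (insert x F)
  have "dim (A \<union> insert x F) \<le> dim (A \<union> F) + 1"
    using dim_insert[of x "A \<union> F"] by simp
  then show ?case using insert by simp
qed simp

end

context finite_dimensional_vector_space_pair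
begin

lemma dim_le_dim_kernel_plus_dim_image:
  assumes f: "Vector_Spaces.linear s1 s2 f" and V: "vs1.subspace V"
  shows "vs1.dim V \<le> vs1.dim {v\<in>V. f v = 0} + vs2.dim (f ` V)"
proof -
  interpret f: Vector_Spaces.linear s1 s2 f by (fact f)
  obtain D where D: "D \<subseteq> f ` V" "vs2.independent D" "f ` V \<subseteq> vs2.span D"
    "card D = vs2.dim (f ` V)"
    by (rule vs2.basis_exists)
  obtain G where G: "G \<subseteq> V" "inj_on f G" "f ` G = D"
    using D(1) by (auto simp: subset_image_inj)
  have "finite D" using D(2) by (rule vs2.finiteI_independent)
  then have "finite G" using G(2,3) finite_image_iff by blast
  have "card G = card D" using card_image[OF G(2)] G(3) by simp
  let ?K = "{v\<in>V. f v = 0}"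
  have "V \<subseteq> vs1.span (?K \<union> G)"
  proof
    fix v assume v: "v \<in> V"
    have "f v \<in> vs2.span (f ` G)" using D(3) G(3) v by auto
    then obtain u where u: "u \<in> vs1.span G" "f u = f v"
      by (auto simp: f.span_image)
    have "u \<in> V" using u(1) G(1) V vs1.span_minimal by blast
    then have "v - u \<in> ?K" using v V u(2) by (simp add: vs1.subspace_diff f.diff)
    then have "(v - u) + u \<in> vs1.span (?K \<union> G)"
      using u(1) vs1.span_mono[of G "?K \<union> G"]
      by (intro vs1.span_add) (auto intro: vs1.span_base)
    then show "v \<in> vs1.span (?K \<union> G)" by simp
  qed
  then have "vs1.dim V \<le> vs1.dim (?K \<union> G)" by (rule vs1.dim_mono)
  also have "\<dots> \<le> vs1.dim ?K + card G"
    using \<open>finite G\<close> by (rule vs1.dim_union_le_card)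
  finally show ?thesis using \<open>card G = card D\<close> D(4) by simp
qed

end

lemma exists_neq_0_neq_1:
  assumes "CARD('a) \<noteq> 2"
  obtains c :: "'a::field" where "c \<noteq> 0" "c \<noteq> 1"
proof -
  have "\<exists>c::'a. c \<noteq> 0 \<and> c \<noteq> 1"
  proof (rule ccontr)
    assume "\<not> ?thesis"
    then have "(UNIV :: 'a set) = {0, 1}" by auto
    then have "CARD('a) = card {0 :: 'a, 1}" by (rule arg_cong)
    then have "CARD('a) = 2" by simp
    with assms show False ..
  qed
  with that show thesis by blast
qed

context vector_space
begin

lemma exists_notin_two_proper_subspaces:
  assumes "subspace H1" "subspace H2" "H1 \<noteq> UNIV" "H2 \<noteq> UNIV"
  obtains x where "x \<notin> H1" "x \<notin> H2"
proof -
  obtain a b where a: "a \<notin> H1" and b: "b \<notin> H2" using assms(3,4) by blast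
  show thesis
  proof (cases "a \<in> H2 \<and> b \<in> H1")
    case True
    have "a + b \<notin> H1"
      using True a assms(1) subspace_diff[of H1 "a + b" b] by auto
    moreover have "a + b \<notin> H2"
      using True b assms(2) subspace_diff[of H2 "a + b" a] by auto
    ultimately show thesis by (rule that)
  next
    case False
    then show thesis using a b that by blast
  qed
qed

lemma line_meets_subspace_at_most_once:
  assumes "subspace H" "e \<notin> H" "x + scale s e \<in> H" "x + scale t e \<in> H"
  shows "s = t"
proof (rule ccontr)
  assume "s \<noteq> t"
  have "(x + scale s e) - (x + scale t e) \<in> H" using assms subspace_diff by blast
  then have "scale (inverse (s - t)) (scale (s - t) e) \<in> H"
    using assms(1) subspace_scale by (simp add: scale_left_diff_distrib)
  then show False using assms(2) \<open>s \<noteq> t\<close> by simp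
qed

lemma exists_line_point_notin_two_subspaces:
  assumes "subspace H1" "subspace H2" "e \<notin> H1" "e \<notin> H2"
    and "CARD('a) = 2 \<Longrightarrow> H1 = H2"
  obtains t where "x + scale t e \<notin> H1" "x + scale t e \<notin> H2"
proof (cases "CARD('a) = 2")
  case True
  have "x + scale 0 e \<notin> H1 \<or> x + scale 1 e \<notin> H1"
    using line_meets_subspace_at_most_once[OF assms(1,3), of x 0 1] by auto
  then show thesis using that assms(5)[OF True] by blast
next
  case False
  then obtain c :: 'a where "c \<noteq> 0" "c \<noteq> 1" by (rule exists_neq_0_neq_1)
  note once1 = line_meets_subspace_at_most_once[OF assms(1,3), of x]
    and once2 = line_meets_subspace_at_most_once[OF assms(2,4), of x]
  \<comment> \<open>Of the three points for \<open>t = 0, 1, c\<close>, two would lie in the same subspace.\<close>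
  show thesis
    using that once1[of 0 1] once1[of 0 c] once1[of 1 c] once2[of 0 1] once2[of 0 c] once2[of 1 c]
      \<open>c \<noteq> 0\<close> \<open>c \<noteq> 1\<close> by (metis zero_neq_one)
qed

end

definition matrix_unit :: "'n \<Rightarrow> 'm \<Rightarrow> 'a::zero_neq_one^'m^'n" where
  "matrix_unit a b = (\<chi> i j. if i = a \<and> j = b then 1 else 0)"

definition matrix_basis :: "('a::zero_neq_one^'m^'n) set" where
  "matrix_basis = range (\<lambda>(a, b). matrix_unit a b)"

lemma matrix_unit_component: "matrix_unit a b $ i $ j = (if i = a \<and> j = b then 1 else 0)"
  unfolding matrix_unit_def by simp

lemma matrix_unit_eq_iff:
  "(matrix_unit a b :: 'a::zero_neq_one^'m^'n) = matrix_unit c d \<longleftrightarrow> a = c \<and> b = d"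
proof
  assume "(matrix_unit a b :: 'a^'m^'n) = matrix_unit c d"
  then have "(matrix_unit a b :: 'a^'m^'n) $ a $ b = matrix_unit c d $ a $ b" by simp
  then show "a = c \<and> b = d" by (simp add: matrix_unit_component split: if_splits)
qed simp

lemma finite_matrix_basis: "finite matrix_basis"
  unfolding matrix_basis_def by simp

lemma mat_scale_component: "mat_scale c M $ i $ j = c * M $ i $ j"
  unfolding mat_scale_def by simp

lemma matrix_unit_expansion:
  "(\<Sum>(a, b)\<in>UNIV. mat_scale (M $ a $ b) (matrix_unit a b)) = (M :: 'a::field^'m^'n)"
proof -
  have "(\<Sum>(a, b)\<in>UNIV. mat_scale (M $ a $ b) (matrix_unit a b)) $ i $ j = M $ i $ j" for i j
  proof -
    have "(\<Sum>(a, b)\<in>UNIV. mat_scale (M $ a $ b) (matrix_unit a b)) $ i $ j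
        = (\<Sum>p\<in>UNIV. if p = (i, j) then M $ i $ j else 0)"
      unfolding sum_component case_prod_beta
      by (intro sum.cong refl) (auto simp: mat_scale_component matrix_unit_component)
    then show ?thesis by simp
  qed
  then show ?thesis by (simp add: vec_eq_iff)
qed

lemma independent_matrix_basis: "matsp.independent (matrix_basis :: ('a::field^'m^'n) set)"
proof (rule matsp.independent_if_scalars_zero)
  show "finite (matrix_basis :: ('a^'m^'n) set)" by (rule finite_matrix_basis)
  fix f :: "'a^'m^'n \<Rightarrow> 'a" and U :: "'a^'m^'n"
  assume sum_0: "(\<Sum>V\<in>matrix_basis. mat_scale (f V) V) = 0" and "U \<in> matrix_basis"
  then obtain a b where U: "U = matrix_unit a b" unfolding matrix_basis_def by auto
  have entry: "V $ a $ b = (if V = U then 1 else 0)" if V: "V \<in> matrix_basis" for V :: "'a^'m^'n"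
  proof -
    obtain c d where "V = matrix_unit c d" using V unfolding matrix_basis_def by auto
    then show ?thesis by (auto simp: U matrix_unit_eq_iff matrix_unit_component)
  qed
  have "(\<Sum>V\<in>matrix_basis. mat_scale (f V) V) $ a $ b = (\<Sum>V\<in>matrix_basis. if V = U then f U else 0)"
    unfolding sum_component mat_scale_component by (intro sum.cong refl) (simp add: entry)
  also have "\<dots> = f U"
    using \<open>U \<in> matrix_basis\<close> by (simp add: finite_matrix_basis)
  finally show "f U = 0" using sum_0 by simp
qed

lemma span_matrix_basis: "matsp.span (matrix_basis :: ('a::field^'m^'n) set) = UNIV"
proof -
  have "M \<in> matsp.span matrix_basis" for M :: "'a^'m^'n"
  proof -
    have "M = (\<Sum>p\<in>UNIV. mat_scale (M $ fst p $ snd p) (matrix_unit (fst p) (snd p)))"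
      using matrix_unit_expansion[of M] by (simp add: case_prod_beta)
    also have "\<dots> \<in> matsp.span matrix_basis"
      by (intro matsp.span_sum matsp.span_scale matsp.span_base) (auto simp: matrix_basis_def)
    finally show ?thesis .
  qed
  then show ?thesis by blast
qed

interpretation matfd: finite_dimensional_vector_space
  "mat_scale :: 'a::field \<Rightarrow> 'a^'m^'n \<Rightarrow> 'a^'m^'n" matrix_basis
  by unfold_locales (fact finite_matrix_basis independent_matrix_basis span_matrix_basis)+

lemma mat_scale_matrix_vector_mult: "mat_scale c M *v x = c *s (M *v x)"
  by (simp add: vec_eq_iff matrix_vector_mult_def mat_scale_def sum_distrib_left mult.assoc)

lemma linear_matrix_vector_mult_left:
  "Vector_Spaces.linear mat_scale (*s) (\<lambda>M::'a::field^'n^'m. M *v x)"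
  by unfold_locales (simp_all add: matrix_vector_mult_add_rdistrib mat_scale_matrix_vector_mult)

interpretation matvec: finite_dimensional_vector_space_pair
  "mat_scale :: 'a::field \<Rightarrow> 'a^'n^'m \<Rightarrow> 'a^'n^'m" matrix_basis
  "(*s) :: 'a \<Rightarrow> 'a^'m \<Rightarrow> 'a^'m" cart_basis ..

definition sdot :: "'a::comm_semiring_1^'n \<Rightarrow> 'a^'n \<Rightarrow> 'a" where
  "sdot y z = (\<Sum>i\<in>UNIV. y $ i * z $ i)"

lemma sdot_commute: "sdot y z = sdot z y"
  unfolding sdot_def by (simp add: mult.commute)

lemma sdot_add_right: "sdot y (u + v) = sdot y u + sdot y v"
  unfolding sdot_def by (simp add: distrib_left sum.distrib)

lemma sdot_zero_right [simp]: "sdot y 0 = 0"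
  unfolding sdot_def by simp

lemma sdot_uminus_right: "sdot y (- z) = - sdot (y::'a::comm_ring_1^'n) z"
  unfolding sdot_def by (simp add: sum_negf)

lemma sdot_scale_right: "sdot y (c *s v) = c * sdot y v"
  unfolding sdot_def by (simp add: sum_distrib_left mult.left_commute)

lemma sdot_zero_left [simp]: "sdot 0 z = 0"
  unfolding sdot_def by simp

lemma sdot_add_left: "sdot (u + v) z = sdot u z + sdot v z"
  unfolding sdot_def by (simp add: distrib_right sum.distrib)

lemma sdot_scale_left: "sdot (c *s v) z = c * sdot v z"
  unfolding sdot_def by (simp add: sum_distrib_left mult.assoc)

lemma sdot_axis_right: "sdot y (axis i 1) = y $ i"
proof -
  have "sdot y (axis i 1) = (\<Sum>j\<in>UNIV. if j = i then y $ j else 0)"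
    unfolding sdot_def by (intro sum.cong) (auto simp: axis_def)
  then show ?thesis by simp
qed

lemma sdot_transpose: "sdot y (M *v x) = sdot (transpose M *v y) x"
proof -
  have "sdot y (M *v x) = (\<Sum>i\<in>UNIV. \<Sum>j\<in>UNIV. y $ i * M $ i $ j * x $ j)"
    unfolding sdot_def matrix_vector_mult_def by (simp add: sum_distrib_left mult.assoc)
  also have "\<dots> = (\<Sum>j\<in>UNIV. \<Sum>i\<in>UNIV. y $ i * M $ i $ j * x $ j)"
    by (rule sum.swap)
  also have "\<dots> = sdot (transpose M *v y) x"
    unfolding sdot_def matrix_vector_mult_def transpose_def
    by (intro sum.cong refl) (simp add: sum_distrib_left sum_distrib_right mult_ac)
  finally show ?thesis .
qed

lemma subspace_sdot_eq_0: "vec.subspace {z::'a::field^'n. sdot y z = 0}"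
  unfolding vec.subspace_def by (auto simp: sdot_add_right sdot_scale_right)

lemma sdot_eq_0_neq_UNIV:
  assumes "y \<noteq> 0"
  shows "{z::'a::comm_semiring_1^'n. sdot y z = 0} \<noteq> UNIV"
proof -
  obtain i where "y $ i \<noteq> 0" using assms by (auto simp: vec_eq_iff)
  then have "axis i 1 \<notin> {z. sdot y z = 0}" by (simp add: sdot_axis_right)
  then show ?thesis by blast
qed

lemma sum_square_antisymmetric_eq_0:
  fixes f :: "'i \<Rightarrow> 'i \<Rightarrow> 'a::ab_group_add"
  assumes "finite A" and "\<And>i j. f j i = - f i j" and "\<And>i. f i i = 0"
  shows "(\<Sum>i\<in>A. \<Sum>j\<in>A. f i j) = 0"
  using assms(1)
proof (induction A rule: finite_induct)
  case (insert a A)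
  have "(\<Sum>i\<in>A. f i a) = - (\<Sum>j\<in>A. f a j)"
    by (simp add: assms(2)[of a] sum_negf)
  then show ?case
    using insert by (simp add: sum.distrib assms(3))
qed simp

lemma alternating_skew:
  assumes "alternating M"
  shows "M $ j $ i = - M $ i $ j"
proof -
  have "transpose M $ i $ j = (- M) $ i $ j" using assms unfolding alternating_def by simp
  then show ?thesis by (simp add: transpose_def)
qed

lemma sdot_alternating_skew:
  assumes "alternating M"
  shows "sdot y (M *v x) = - sdot x (M *v y)"
proof -
  have "transpose M = - M" using assms unfolding alternating_def by simp
  moreover have "(- M) *v y = - (M *v y)"
    by (simp add: vec_eq_iff matrix_vector_mult_def sum_negf)
  ultimately show ?thesis
    by (simp add: sdot_transpose sdot_commute[of _ x] sdot_uminus_right)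
qed

lemma sdot_alternating_self:
  assumes "alternating M"
  shows "sdot x (M *v x) = 0"
proof -
  have "sdot x (M *v x) = (\<Sum>i\<in>UNIV. \<Sum>j\<in>UNIV. x $ i * M $ i $ j * x $ j)"
    unfolding sdot_def matrix_vector_mult_def by (simp add: sum_distrib_left mult.assoc)
  also have "\<dots> = 0"
  proof (rule sum_square_antisymmetric_eq_0)
    show "x $ j * M $ j $ i * x $ i = - (x $ i * M $ i $ j * x $ j)" for i j
      by (simp add: alternating_skew[OF assms, of j i] mult_ac)
    show "x $ i * M $ i $ i * x $ i = 0" for i
      using assms by (simp add: alternating_def)
  qed simp
  finally show ?thesis .
qed

definition annihilator :: "('a::comm_semiring_1^'n) set \<Rightarrow> ('a^'n) set" where
  "annihilator S = {y. \<forall>z\<in>S. sdot y z = 0}"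

lemma annihilator_empty [simp]: "annihilator {} = UNIV"
  unfolding annihilator_def by simp

lemma subspace_annihilator: "vec.subspace (annihilator (S :: ('a::field^'n) set))"
  unfolding annihilator_def vec.subspace_def
  by (auto simp: sdot_add_left sdot_scale_left)

lemma linear_functional_eq_sdot:
  assumes "Vector_Spaces.linear (*s) ((*) :: 'a::field \<Rightarrow> 'a \<Rightarrow> 'a) g"
  shows "g v = sdot (\<chi> i. g (axis i 1)) (v :: 'a^'n)"
proof -
  interpret g: Vector_Spaces.linear "(*s) :: 'a \<Rightarrow> 'a^'n \<Rightarrow> 'a^'n" "(*)" g by (fact assms)
  have "g v = g (\<Sum>i\<in>UNIV. v $ i *s axis i 1)" by (simp only: basis_expansion)
  also have "\<dots> = (\<Sum>i\<in>UNIV. v $ i * g (axis i 1))" by (simp only: g.sum g.scale)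
  also have "\<dots> = sdot (\<chi> i. g (axis i 1)) v" unfolding sdot_def by (simp add: mult.commute)
  finally show ?thesis .
qed

lemma exists_annihilator_sdot_neq_0:
  fixes Z :: "('a::field^'n) set"
  assumes "e \<notin> vec.span Z"
  obtains y where "y \<in> annihilator Z" and "sdot y e \<noteq> 0"
proof -
  interpret functionals: vector_space_pair "(*s) :: 'a \<Rightarrow> 'a^'n \<Rightarrow> 'a^'n" "(*) :: 'a \<Rightarrow> 'a \<Rightarrow> 'a"
    by unfold_locales
  obtain B where B: "B \<subseteq> vec.span Z" "vec.independent B" "vec.span Z \<subseteq> vec.span B"
    by (rule vec.maximal_independent_subset)
  have span_B: "vec.span B = vec.span Z"
    using B(1,3) vec.subspace_span by (rule vec.span_subspace)
  have indep: "vec.independent (insert e B)"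
    using assms B(2) unfolding span_B[symmetric] by (rule vec.independent_insertI)
  define g where "g = functionals.construct (insert e B) (\<lambda>x. if x = e then 1 else 0)"
  have g_linear: "Vector_Spaces.linear (*s) (*) g"
    unfolding g_def using indep by (rule functionals.linear_construct)
  have g_basis: "g x = (if x = e then 1 else 0)" if "x \<in> insert e B" for x
    unfolding g_def using indep that by (rule functionals.construct_basis)
  have "g z = 0" if "z \<in> Z" for z
  proof (rule functionals.linear_eq_0_on_span[OF g_linear])
    show "g b = 0" if "b \<in> B" for b
    proof -
      have "b \<noteq> e" using that B(1) assms by blast
      then show ?thesis using g_basis[of b] that by simp
    qed
    show "z \<in> vec.span B" using that span_B vec.span_base by blast
  qed
  then have "(\<chi> i. g (axis i 1)) \<in> annihilator Z"
    unfolding annihilator_def by (simp add: linear_functional_eq_sdot[OF g_linear, symmetric])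
  moreover have "sdot (\<chi> i. g (axis i 1)) e \<noteq> 0"
    using g_basis[of e] by (simp add: linear_functional_eq_sdot[OF g_linear, symmetric])
  ultimately show thesis by (rule that)
qed

lemma span_eq_UNIV_if_dim_annihilator_eq_0:
  fixes Z :: "('a::field^'n) set"
  assumes "vec.dim (annihilator Z) = 0"
  shows "vec.span Z = UNIV"
proof (rule ccontr)
  assume "vec.span Z \<noteq> UNIV"
  then obtain e where "e \<notin> vec.span Z" by blast
  then obtain y where "y \<in> annihilator Z" "sdot y e \<noteq> 0"
    by (rule exists_annihilator_sdot_neq_0)
  moreover have "annihilator Z \<subseteq> {0}" using assms vec.dim_eq_0 by blast
  ultimately show False by (metis sdot_zero_left singletonD subsetD)
qed

lemma dim_annihilator_insert_less:
  fixes Z :: "('a::field^'n) set"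
  assumes "e \<notin> vec.span Z"
  shows "vec.dim (annihilator (insert e Z)) < vec.dim (annihilator Z)"
proof -
  obtain y where "y \<in> annihilator Z" "sdot y e \<noteq> 0"
    using assms by (rule exists_annihilator_sdot_neq_0)
  then have "annihilator (insert e Z) \<subset> annihilator Z"
    unfolding annihilator_def by blast
  then have "vec.span (annihilator (insert e Z)) \<subset> vec.span (annihilator Z)"
    by (simp add: vec.span_eq_iff[THEN iffD2, OF subspace_annihilator])
  then show ?thesis by (rule vec.dim_psubset)
qed

abbreviation eval_space :: "('a::semiring_1^'n^'m) set \<Rightarrow> 'a^'n \<Rightarrow> ('a^'m) set" where
  "eval_space V x \<equiv> (\<lambda>M. M *v x) ` V"

lemma subspace_vanishing_at:
  assumes "matsp.subspace V"
  shows "matsp.subspace {M\<in>V. M *v e = (0::'a::field^'m)}"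
  using assms unfolding matsp.subspace_def
  by (simp add: matrix_vector_mult_add_rdistrib mat_scale_matrix_vector_mult)

lemma vanishing_on_span:
  assumes "\<forall>z\<in>Z. M *v z = (0::'a::field^'m)" "z \<in> vec.span Z"
  shows "M *v z = 0"
proof -
  have "vec.subspace {z. M *v z = (0::'a^'m)}"
    unfolding vec.subspace_def by (simp add: matrix_vector_right_distrib vector_scalar_commute)
  with assms(1) have "vec.span Z \<subseteq> {z. M *v z = 0}" by (intro vec.span_minimal) auto
  with assms(2) show ?thesis by blast
qed

lemma eq_0_if_vanishing_on_spanning:
  assumes "vec.span Z = UNIV" "\<forall>z\<in>Z. M *v z = (0::'a::field^'m)"
  shows "M = 0"
proof -
  have "M *v x = 0 *v x" for x
    using assms vanishing_on_span[of Z M x] by simp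
  then show ?thesis by (subst matrix_eq) blast
qed

lemma dim_eq_0_if_vanishing_on_spanning:
  fixes V :: "('a::field^'n^'m) set"
  assumes "vec.span Z = UNIV" "\<forall>M\<in>V. \<forall>z\<in>Z. M *v z = 0"
  shows "matsp.dim V = 0"
proof -
  have "V \<subseteq> {0}" using assms eq_0_if_vanishing_on_spanning by blast
  then show ?thesis by (simp add: matfd.dim_eq_0)
qed

lemma dim_le_dim_vanishing_at_plus_dim_eval_space:
  fixes V :: "('a::field^'n^'m) set"
  assumes "matsp.subspace V"
  shows "matsp.dim V \<le> matsp.dim {M\<in>V. M *v e = 0} + vec.dim (eval_space V e)"
  using linear_matrix_vector_mult_left assms by (rule matvec.dim_le_dim_kernel_plus_dim_image)

lemma dim_vanishing_at_gt:
  fixes V :: "('a::field^'n^'m) set"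
  assumes "matsp.subspace V" "k choose 2 < matsp.dim V" "vec.dim (eval_space V e) < k"
  shows "(k - 1) choose 2 < matsp.dim {M\<in>V. M *v e = 0}"
proof -
  obtain j where k: "k = Suc j" using assms(3) by (cases k) auto
  show ?thesis
    using dim_le_dim_vanishing_at_plus_dim_eval_space[OF assms(1), of e] assms(2,3)
    by (simp add: k numeral_2_eq_2)
qed

lemma eval_space_subset_annihilator:
  assumes "\<forall>M\<in>V. alternating M" "\<forall>M\<in>V. \<forall>z\<in>Z. M *v z = 0"
  shows "eval_space V e \<subseteq> annihilator (insert e Z)"
proof
  fix w assume "w \<in> eval_space V e"
  then obtain M where M: "M \<in> V" "w = M *v e" by blast
  have alt: "alternating M" using M(1) assms(1) by blast
  have "sdot w z = 0" if "z \<in> insert e Z" for z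
  proof -
    have "sdot w z = sdot z (M *v e)" unfolding M(2) by (rule sdot_commute)
    also have "\<dots> = - sdot e (M *v z)" by (rule sdot_alternating_skew[OF alt])
    also have "\<dots> = 0"
      using that M(1) assms(2) sdot_alternating_self[OF alt, of e] by auto
    finally show ?thesis .
  qed
  then show "w \<in> annihilator (insert e Z)" unfolding annihilator_def by blast
qed

lemma dim_alternating_vanishing_le:
  fixes V :: "('a::field^'n^'n) set"
  assumes "matsp.subspace V" "\<forall>M\<in>V. alternating M" "\<forall>M\<in>V. \<forall>z\<in>Z. M *v z = 0"
    and "vec.dim (annihilator Z) \<le> k"
  shows "matsp.dim V \<le> k choose 2"
  using assms
proof (induction k arbitrary: V Z)
  case 0
  then have "vec.span Z = UNIV" by (intro span_eq_UNIV_if_dim_annihilator_eq_0) simp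
  then have "matsp.dim V = 0" using "0.prems"(3) by (rule dim_eq_0_if_vanishing_on_spanning)
  then show ?case by (simp only: le0)
next
  case (Suc k)
  show ?case
  proof (cases "vec.span Z = UNIV")
    case True
    then have "matsp.dim V = 0" using Suc.prems(3) by (rule dim_eq_0_if_vanishing_on_spanning)
    then show ?thesis by (simp only: le0)
  next
    case False
    then obtain e where e: "e \<notin> vec.span Z" by blast
    let ?V0 = "{M\<in>V. M *v e = 0}"
    have ann: "vec.dim (annihilator (insert e Z)) \<le> k"
      using dim_annihilator_insert_less[OF e] Suc.prems(4) by simp
    have "matsp.dim ?V0 \<le> k choose 2"
      using Suc.prems(1-3) ann by (intro Suc.IH) (auto intro: subspace_vanishing_at)
    moreover have "vec.dim (eval_space V e) \<le> k"
      using vec.dim_subset[OF eval_space_subset_annihilator[OF Suc.prems(2,3), of e]] ann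
      by linarith
    moreover have "matsp.dim V \<le> matsp.dim ?V0 + vec.dim (eval_space V e)"
      using Suc.prems(1) by (rule dim_le_dim_vanishing_at_plus_dim_eval_space)
    ultimately show ?thesis by (simp add: numeral_2_eq_2)
  qed
qed

lemma dim_eval_space_vanishing_less:
  fixes V :: "('a::field^'n^'n) set"
  assumes "\<forall>M\<in>V. alternating M" "M1 \<in> V" "sdot x (M1 *v e) \<noteq> 0"
  shows "vec.dim (eval_space {M\<in>V. M *v e = 0} x) < vec.dim (eval_space V (x + t *s e))"
proof -
  let ?V0 = "{M\<in>V. M *v e = 0}" and ?y = "x + t *s e"
  have shift: "eval_space ?V0 ?y = eval_space ?V0 x"
    by (rule image_cong) (simp_all add: matrix_vector_right_distrib vector_scalar_commute)
  have "eval_space ?V0 x \<subseteq> {v. sdot e v = 0}"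
  proof
    fix v assume "v \<in> eval_space ?V0 x"
    then obtain M where "M \<in> V" "M *v e = 0" "v = M *v x" by blast
    then show "v \<in> {v. sdot e v = 0}" using assms(1) sdot_alternating_skew[of M e x] by simp
  qed
  then have span_V0: "vec.span (eval_space ?V0 x) \<subseteq> {v. sdot e v = 0}"
    using subspace_sdot_eq_0 by (rule vec.span_minimal)
  have "sdot e (M1 *v ?y) = - sdot x (M1 *v e)"
    using assms(1,2) sdot_alternating_skew[of M1 e x] sdot_alternating_self[of M1 e]
    by (simp add: matrix_vector_right_distrib vector_scalar_commute sdot_add_right sdot_scale_right)
  then have "M1 *v ?y \<notin> vec.span (eval_space ?V0 x)" using span_V0 assms(3) by auto
  then have "vec.dim (eval_space ?V0 x) < vec.dim (insert (M1 *v ?y) (eval_space ?V0 x))"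
    by (simp add: vec.dim_insert)
  also have "\<dots> \<le> vec.dim (eval_space V ?y)"
    using assms(2) shift by (intro vec.dim_subset) auto
  finally show ?thesis .
qed

lemma exists_large_eval_space_off_subspaces:
  fixes V :: "('a::field^'n^'n) set" and H1 H2 :: "('a^'n) set"
  assumes "matsp.subspace V" "\<forall>M\<in>V. alternating M" "\<forall>M\<in>V. \<forall>z\<in>Z. M *v z = 0"
    and "vec.dim (annihilator Z) \<le> k"
    and "vec.subspace H1" "vec.subspace H2" "H1 \<noteq> UNIV" "H2 \<noteq> UNIV" "Z \<subseteq> H1"
    and "CARD('a) = 2 \<Longrightarrow> H1 = H2"
    and "(k - 1) choose 2 < matsp.dim V"
  shows "\<exists>x. x \<notin> H1 \<and> x \<notin> H2 \<and> k - 1 \<le> vec.dim (eval_space V x)"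
  using assms
proof (induction k arbitrary: V Z H1 H2)
  case 0
  then have "matsp.dim V \<le> 0 choose 2" by (intro dim_alternating_vanishing_le) auto
  with "0.prems"(11) show ?case by simp
next
  case (Suc k)
  obtain e where e: "e \<notin> H1" "e \<notin> H2"
    using Suc.prems(5-8) by (rule vec.exists_notin_two_proper_subspaces)
  have e_Z: "e \<notin> vec.span Z" using e(1) Suc.prems(5,9) vec.span_minimal by blast
  show ?case
  proof (cases "k \<le> vec.dim (eval_space V e)")
    case True
    then show ?thesis using e by auto
  next
    case False
    let ?V0 = "{M\<in>V. M *v e = 0}"
    have ann: "vec.dim (annihilator (insert e Z)) \<le> k"
      using dim_annihilator_insert_less[OF e_Z] Suc.prems(4) by simp
    have "\<not> (\<forall>M\<in>V. M *v e = 0)"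
    proof
      assume "\<forall>M\<in>V. M *v e = 0"
      then have "matsp.dim V \<le> k choose 2"
        using Suc.prems(1-3) ann by (intro dim_alternating_vanishing_le) auto
      with Suc.prems(11) show False by simp
    qed
    then obtain M1 where M1: "M1 \<in> V" "M1 *v e \<noteq> 0" by blast
    let ?H = "{y. sdot (M1 *v e) y = 0}"
    have "M1 *v e \<in> annihilator (insert e Z)"
      using eval_space_subset_annihilator[OF Suc.prems(2,3)] M1(1) by blast
    then have Z_H: "insert e Z \<subseteq> ?H" unfolding annihilator_def by auto
    have large: "(k - 1) choose 2 < matsp.dim ?V0"
      using Suc.prems(1,11) False by (intro dim_vanishing_at_gt) auto
    have "?H \<noteq> UNIV" using M1(2) by (rule sdot_eq_0_neq_UNIV)
    then have "\<exists>x. x \<notin> ?H \<and> x \<notin> ?H \<and> k - 1 \<le> vec.dim (eval_space ?V0 x)"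
      using Suc.prems(1-3) ann Z_H large
      by (intro Suc.IH) (auto intro: subspace_vanishing_at subspace_sdot_eq_0)
    then obtain x where x: "sdot (M1 *v e) x \<noteq> 0" "k - 1 \<le> vec.dim (eval_space ?V0 x)" by blast
    obtain t where t: "x + t *s e \<notin> H1" "x + t *s e \<notin> H2"
      using Suc.prems(5,6) e Suc.prems(10) by (rule vec.exists_line_point_notin_two_subspaces)
    have "sdot x (M1 *v e) \<noteq> 0" using x(1) by (simp add: sdot_commute[of x])
    then have "vec.dim (eval_space ?V0 x) < vec.dim (eval_space V (x + t *s e))"
      using Suc.prems(2) M1(1) by (intro dim_eval_space_vanishing_less)
    then show ?thesis using t x(2) by (intro exI[of _ "x + t *s e"]) auto
  qed
qed

lemma linear_hyperplane_proper_subspace: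
  assumes "linear_hyperplane (H :: ('a::field^'n) set)"
  shows "vec.subspace H" "H \<noteq> UNIV"
proof -
  obtain a :: "'a^'n" where "a \<noteq> 0" "H = {x. sdot a x = 0}"
    using assms unfolding linear_hyperplane_def sdot_def by blast
  then show "vec.subspace H" "H \<noteq> UNIV" by (simp_all add: subspace_sdot_eq_0 sdot_eq_0_neq_UNIV)
qed

lemma dim_eval_space_alternating_less:
  fixes V :: "('a::field^'n^'n) set"
  assumes "\<forall>M\<in>V. alternating M" "x \<noteq> 0"
  shows "vec.dim (eval_space V x) < CARD('n)"
proof -
  have "eval_space V x \<subseteq> {v. sdot x v = 0}" using assms(1) sdot_alternating_self by blast
  then have "vec.dim (eval_space V x) \<le> vec.dim {v. sdot x v = 0}" by (rule vec.dim_subset)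
  also have "\<dots> < vec.dim (UNIV :: ('a^'n) set)"
  proof (rule vec.dim_psubset)
    show "vec.span {v. sdot x v = 0} \<subset> vec.span UNIV"
      using sdot_eq_0_neq_UNIV[OF assms(2)]
      by (simp add: vec.span_eq_iff[THEN iffD2, OF subspace_sdot_eq_0]) blast
  qed
  finally show ?thesis by (simp only: vec_dim_card)
qed

theorem mainTheorem18:
  fixes V :: "('a::field^'n^'n) set" and C :: "('a^'n) set"
  assumes "matsp.subspace V"
    and "\<forall>M\<in>V. alternating M"
    and "CARD('a) = 2 \<Longrightarrow> linear_hyperplane C"
    and "CARD('a) \<noteq> 2 \<Longrightarrow> (\<exists>H1 H2. linear_hyperplane H1 \<and> linear_hyperplane H2 \<and> C = H1 \<union> H2)"
    and "{x. vec.dim ((\<lambda>M. M *v x) ` V) = CARD('n) - 1} \<subseteq> C"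
  shows "matsp.dim V \<le> (CARD('n) - 1) choose 2"
proof (rule ccontr)
  assume large: "\<not> ?thesis"
  obtain H1 H2 where H: "linear_hyperplane H1" "linear_hyperplane H2" "C = H1 \<union> H2"
    and H_card: "CARD('a) = 2 \<Longrightarrow> H1 = H2"
    using assms(3,4) by (cases "CARD('a) = 2") blast+
  note H1 = linear_hyperplane_proper_subspace[OF H(1)]
    and H2 = linear_hyperplane_proper_subspace[OF H(2)]
  obtain x where x: "x \<notin> H1" "x \<notin> H2" "CARD('n) - 1 \<le> vec.dim (eval_space V x)"
    using exists_large_eval_space_off_subspaces[of V "{}" "CARD('n)" H1 H2] assms(1,2) H1 H2
      H_card large
    by (auto simp: card_cart_basis)
  have "x \<noteq> 0" using x(1) H1(1) vec.subspace_0 by blast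
  then have "vec.dim (eval_space V x) = CARD('n) - 1"
    using dim_eval_space_alternating_less[OF assms(2) \<open>x \<noteq> 0\<close>] x(3) by linarith
  then have "x \<in> C" using assms(5) by blast
  with x H(3) show False by blast
qed

end
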